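(* Let $T\in TP(d)$ be a biplanar extremal thermal process and let $(\lambda,\mu)$ be a pair of orderings for which the drawing of $G(T)$ is plain (orders $\pi_{in}(T)=\lambda$, $\pi_{out}(T)=\mu$). Let $p$ be a state of which $\lambda$ is a $\beta$-order. Then $r=Tp$ is an extreme point of $p^{TP}=\{Sp:S\in TP(d)\}$ and $\mu$ is a $\beta$-order of $r$. If moreover the ratios $p_i/g_i$ are pairwise distinct, then $T$ is the only element of $TP(d)$ mapping $p$ to $r$.
   Context: Fix $d\ge 2$, $\beta\in(0,\infty)$ and pairwise distinct reals $E_0=0,E_1,\dots,E_{d-1}$. Put $q_{m,n}=e^{-\beta(E_m-E_n)}$, $Z=\sum_j q_{j,0}$, $g_i=q_{i,0}/Z$. A state is a probability vector in $\mathbb{R}^d$. $TP(d)$ is the set of $d\times d$ real matrices with non-negative entries, columns summing to $1$, and $Tg=g$; an extremal thermal process is an extreme point of $TP(d)$. A $\beta$-order of a state $p$ is a tuple $(\pi(0),\dots,\pi(d-1))$ for a permutation $\pi$ of $\{0,\dots,d-1\}$ with $p_{\pi(0)}/g_{\pi(0)}\ge\dots\ge p_{\pi(d-1)}/g_{\pi(d-1)}$. For $T\in TP(d)$, $G(T)$ is the bipartite graph with left vertices $L_0,\dots,L_{d-1}$ (columns), right vertices $R_0,\dots,R_{d-1}$ (rows), and an edge $\{L_j,R_i\}$ iff $T_{ij}>0$. Given orderings $\lambda=(\lambda_0,\dots,\lambda_{d-1})$, $\mu=(\mu_0,\dots,\mu_{d-1})$ (permutations of $\{0,\dots,d-1\}$),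 place $L_{\lambda_a}$ at height $a$ on one vertical line and $R_{\mu_b}$ at height $b$ on a parallel line, edges drawn straight; the drawing is plain if there are no two edges $\{L_{\lambda_a},R_{\mu_b}\}$, $\{L_{\lambda_{a'}},R_{\mu_{b'}}\}$ with $a<a'$ and $b>b'$. An extremal thermal process is biplanar if some pair $(\lambda,\mu)$ gives a plain drawing. *)

theory Defs
  imports Main "HOL-Analysis.Analysis"
begin

text \<open>Vectors of R^d are functions nat => real, indices 0..d-1, value 0 outside.
  d x d matrices are functions nat => nat => real (row, column), entry 0 outside the block.\<close>

definition qq :: "real \<Rightarrow> (nat \<Rightarrow> real) \<Rightarrow> nat \<Rightarrow> nat \<Rightarrow> real" where
  "qq \<beta> E m n = exp (- \<beta> * (E m - E n))"

definition ZZ :: "nat \<Rightarrow> real \<Rightarrow> (nat \<Rightarrow> real) \<Rightarrow> real" where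
  "ZZ d \<beta> E = (\<Sum>j<d. qq \<beta> E j 0)"

definition gibbs :: "nat \<Rightarrow> real \<Rightarrow> (nat \<Rightarrow> real) \<Rightarrow> nat \<Rightarrow> real" where
  "gibbs d \<beta> E i = (if i < d then qq \<beta> E i 0 / ZZ d \<beta> E else 0)"

definition is_state :: "nat \<Rightarrow> (nat \<Rightarrow> real) \<Rightarrow> bool" where
  "is_state d p \<longleftrightarrow> (\<forall>i<d. 0 \<le> p i) \<and> (\<forall>i\<ge>d. p i = 0) \<and> (\<Sum>i<d. p i) = 1"

definition mat_app :: "nat \<Rightarrow> (nat \<Rightarrow> nat \<Rightarrow> real) \<Rightarrow> (nat \<Rightarrow> real) \<Rightarrow> nat \<Rightarrow> real" where
  "mat_app d T p i = (if i < d then (\<Sum>j<d. T i j * p j) else 0)"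

definition TP :: "nat \<Rightarrow> real \<Rightarrow> (nat \<Rightarrow> real) \<Rightarrow> (nat \<Rightarrow> nat \<Rightarrow> real) set" where
  "TP d \<beta> E = {T. (\<forall>i j. (i \<ge> d \<or> j \<ge> d) \<longrightarrow> T i j = 0)
                 \<and> (\<forall>i<d. \<forall>j<d. 0 \<le> T i j)
                 \<and> (\<forall>j<d. (\<Sum>i<d. T i j) = 1)
                 \<and> mat_app d T (gibbs d \<beta> E) = gibbs d \<beta> E}"

definition is_extreme_point :: "('a \<Rightarrow> real) \<Rightarrow> ('a \<Rightarrow> real) set \<Rightarrow> bool" where
  "is_extreme_point x S \<longleftrightarrow> x \<in> S \<and>
     (\<forall>a\<in>S. \<forall>b\<in>S. \<forall>t::real. 0 < t \<and> t < 1 \<and> a \<noteq> b \<longrightarrow> x \<noteq> (\<lambda>k. (1 - t) * a k + t * b k))"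

definition extremal_TP :: "nat \<Rightarrow> real \<Rightarrow> (nat \<Rightarrow> real) \<Rightarrow> (nat \<Rightarrow> nat \<Rightarrow> real) \<Rightarrow> bool" where
  "extremal_TP d \<beta> E T \<longleftrightarrow>
     is_extreme_point (\<lambda>(i, j). T i j) ((\<lambda>S (i, j). S i j) ` TP d \<beta> E)"

definition is_ordering :: "nat \<Rightarrow> (nat \<Rightarrow> nat) \<Rightarrow> bool" where
  "is_ordering d \<pi> \<longleftrightarrow> bij_betw \<pi> {..<d} {..<d}"

definition beta_order :: "nat \<Rightarrow> real \<Rightarrow> (nat \<Rightarrow> real) \<Rightarrow> (nat \<Rightarrow> real) \<Rightarrow> (nat \<Rightarrow> nat) \<Rightarrow> bool" where
  "beta_order d \<beta> E p \<pi> \<longleftrightarrow> is_ordering d \<pi> \<and>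
     (\<forall>a. a + 1 < d \<longrightarrow>
        p (\<pi> a) / gibbs d \<beta> E (\<pi> a) \<ge> p (\<pi> (a + 1)) / gibbs d \<beta> E (\<pi> (a + 1)))"

text \<open>Edge {L_j, R_i} of G(T) iff T_ij > 0.\<close>
definition G_edge :: "(nat \<Rightarrow> nat \<Rightarrow> real) \<Rightarrow> nat \<Rightarrow> nat \<Rightarrow> bool" where
  "G_edge T j i \<longleftrightarrow> T i j > 0"

definition plain_drawing :: "nat \<Rightarrow> (nat \<Rightarrow> nat \<Rightarrow> real) \<Rightarrow> (nat \<Rightarrow> nat) \<Rightarrow> (nat \<Rightarrow> nat) \<Rightarrow> bool" where
  "plain_drawing d T lam mu \<longleftrightarrow>
     \<not> (\<exists>a a' b b'. a < d \<and> a' < d \<and> b < d \<and> b' < d \<and> a < a' \<and> b > b' \<and>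
          G_edge T (lam a) (mu b) \<and> G_edge T (lam a') (mu b'))"

definition biplanar :: "nat \<Rightarrow> real \<Rightarrow> (nat \<Rightarrow> real) \<Rightarrow> (nat \<Rightarrow> nat \<Rightarrow> real) \<Rightarrow> bool" where
  "biplanar d \<beta> E T \<longleftrightarrow> extremal_TP d \<beta> E T \<and>
     (\<exists>lam mu. is_ordering d lam \<and> is_ordering d mu \<and> plain_drawing d T lam mu)"

definition TP_orbit :: "nat \<Rightarrow> real \<Rightarrow> (nat \<Rightarrow> real) \<Rightarrow> (nat \<Rightarrow> real) \<Rightarrow> (nat \<Rightarrow> real) set" where
  "TP_orbit d \<beta> E p = {mat_app d S p | S. S \<in> TP d \<beta> E}"

end

theory Submission
  imports Defs
begin

text \<open>
  Write \<rho> j = p j / g j. For S \<in> TP(d) and k \<le> d, the sum of the first k entries of Sp in the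
  order \<mu> is \<Sum>j. w j * g j * \<rho> j with column weights w j = \<Sum>b<k. S (\<mu> b) j in [0,1], and Sg = g
  makes the mass \<Sum>j. w j * g j independent of S. Because the drawing of G(T) is plain and \<rho>
  decreases along \<lambda>, the weights of T are greedy: a column of positive weight never has smaller
  \<rho> than a column of weight below 1. So T solves each of these fractional knapsack problems, i.e.
  the prefix sums of Tp dominate those of every point of p^TP, which makes Tp extreme. When the
  values \<rho> j are distinct the knapsack optimum is unique; this determines every prefix column
  sum of a preimage S and hence S itself. The same planarity bound applied to the consecutive
  rows \<mu> a and \<mu> (a + 1) yields the \<beta>-order \<mu> of Tp.
\<close>

lemma greedy_weights_threshold:
  fixes J :: "'a set" and w \<rho> :: "'a \<Rightarrow> real"
  assumes "finite J"
    and greedy: "\<And>j j'. j \<in> J \<Longrightarrow> j' \<in> J \<Longrightarrow> 0 < w j \<Longrightarrow> w j' < 1 \<Longrightarrow> \<rho> j' \<le> \<rho> j"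
  obtains t where "\<And>j. j \<in> J \<Longrightarrow> 0 < w j \<Longrightarrow> t \<le> \<rho> j"
    and "\<And>j. j \<in> J \<Longrightarrow> w j < 1 \<Longrightarrow> \<rho> j \<le> t"
proof
  define t where "t = Min (insert (Max (\<rho> ` J)) (\<rho> ` {j \<in> J. 0 < w j}))"
  show "t \<le> \<rho> j" if "j \<in> J" "0 < w j" for j
    unfolding t_def using that \<open>finite J\<close> by (intro Min_le) auto
  show "\<rho> j \<le> t" if "j \<in> J" "w j < 1" for j
    unfolding t_def using that \<open>finite J\<close> greedy by (auto intro: Max_ge)
qed

lemma fractional_knapsack:
  fixes J :: "'a set" and g \<rho> v w :: "'a \<Rightarrow> real"
  assumes "finite J"
    and g_pos: "\<And>j. j \<in> J \<Longrightarrow> 0 < g j"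
    and v_bounds: "\<And>j. j \<in> J \<Longrightarrow> 0 \<le> v j \<and> v j \<le> 1"
    and greedy: "\<And>j j'. j \<in> J \<Longrightarrow> j' \<in> J \<Longrightarrow> 0 < w j \<Longrightarrow> w j' < 1 \<Longrightarrow> \<rho> j' \<le> \<rho> j"
    and same_mass: "(\<Sum>j\<in>J. v j * g j) = (\<Sum>j\<in>J. w j * g j)"
  shows "(\<Sum>j\<in>J. v j * g j * \<rho> j) \<le> (\<Sum>j\<in>J. w j * g j * \<rho> j)"
    and "inj_on \<rho> J \<Longrightarrow> (\<Sum>j\<in>J. v j * g j * \<rho> j) = (\<Sum>j\<in>J. w j * g j * \<rho> j) \<Longrightarrow>
      j \<in> J \<Longrightarrow> v j = w j"
proof -
  obtain t where above: "\<And>j. j \<in> J \<Longrightarrow> 0 < w j \<Longrightarrow> t \<le> \<rho> j"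
    and below: "\<And>j. j \<in> J \<Longrightarrow> w j < 1 \<Longrightarrow> \<rho> j \<le> t"
    using greedy_weights_threshold[of J w \<rho>] \<open>finite J\<close> greedy by metis
  define e where "e j = (w j - v j) * g j * (\<rho> j - t)" for j
  have e_nonneg: "0 \<le> e j" if "j \<in> J" for j
  proof -
    have "0 \<le> (w j - v j) * (\<rho> j - t)"
      using above[OF that] below[OF that] v_bounds[OF that]
      by (cases "v j < w j"; cases "w j < v j") (auto intro: mult_nonpos_nonpos)
    then show ?thesis
      unfolding e_def using g_pos[OF that] by (metis mult.commute mult.left_commute mult_nonneg_nonneg less_imp_le)
  qed
  \<comment> \<open>the mass constraint makes the threshold term vanish\<close>
  have excess: "(\<Sum>j\<in>J. w j * g j * \<rho> j) - (\<Sum>j\<in>J. v j * g j * \<rho> j) = (\<Sum>j\<in>J. e j)"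
  proof -
    have "(\<Sum>j\<in>J. e j) = (\<Sum>j\<in>J. w j * g j * \<rho> j - v j * g j * \<rho> j) - t * (\<Sum>j\<in>J. w j * g j - v j * g j)"
      unfolding e_def sum_distrib_left sum_subtractf[symmetric] by (intro sum.cong) (auto simp: algebra_simps)
    then show ?thesis
      using same_mass by (simp add: sum_subtractf)
  qed
  then show "(\<Sum>j\<in>J. v j * g j * \<rho> j) \<le> (\<Sum>j\<in>J. w j * g j * \<rho> j)"
    using sum_nonneg[of J e, OF e_nonneg] by linarith
  assume inj: "inj_on \<rho> J" and eq: "(\<Sum>j\<in>J. v j * g j * \<rho> j) = (\<Sum>j\<in>J. w j * g j * \<rho> j)"
    and "j \<in> J"
  have "\<forall>j\<in>J. e j = 0"
    using excess eq e_nonneg sum_nonneg_eq_0_iff[OF \<open>finite J\<close>] by auto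
  then have off_threshold: "v j' = w j'" if "j' \<in> J" "\<rho> j' \<noteq> t" for j'
    using that g_pos[OF that(1)] unfolding e_def by auto
  show "v j = w j"
  proof (cases "\<rho> j = t")
    case True
    have "v j' = w j'" if "j' \<in> J - {j}" for j'
      using that True inj \<open>j \<in> J\<close> off_threshold unfolding inj_on_def by auto
    then have "(\<Sum>j'\<in>J - {j}. w j' * g j' - v j' * g j') = 0"
      by (intro sum.neutral) auto
    moreover have "(\<Sum>j'\<in>J. w j' * g j' - v j' * g j') = 0"
      using same_mass by (simp add: sum_subtractf)
    ultimately have "w j * g j - v j * g j = 0"
      using sum.remove[OF \<open>finite J\<close> \<open>j \<in> J\<close>, of "\<lambda>j'. w j' * g j' - v j' * g j'"] by simp
    then show ?thesis
      using g_pos[OF \<open>j \<in> J\<close>] by (simp add: left_diff_distrib[symmetric])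
  qed (use off_threshold \<open>j \<in> J\<close> in blast)
qed

lemma eq_if_prefix_sums_eq:
  fixes x y :: "nat \<Rightarrow> 'a::ab_group_add"
  assumes mu: "bij_betw mu {..<d} {..<d}"
    and prefix: "\<And>k. k \<le> d \<Longrightarrow> (\<Sum>b<k. x (mu b)) = (\<Sum>b<k. y (mu b))"
    and "\<And>i. d \<le> i \<Longrightarrow> x i = 0" and "\<And>i. d \<le> i \<Longrightarrow> y i = 0"
  shows "x = y"
proof
  fix i
  show "x i = y i"
  proof (cases "i < d")
    case True
    then obtain b where "b < d" "i = mu b"
      using mu by (metis bij_betw_iff_bijections lessThan_iff)
    then show ?thesis
      using prefix[of b] prefix[of "Suc b"] by simp
  qed (use assms in auto)
qed

lemma extreme_point_if_prefix_sums_maximal: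
  fixes X :: "(nat \<Rightarrow> real) set"
  assumes mu: "bij_betw mu {..<d} {..<d}" and "r \<in> X"
    and vanish: "\<And>x i. x \<in> X \<Longrightarrow> d \<le> i \<Longrightarrow> x i = 0"
    and maximal: "\<And>x k. x \<in> X \<Longrightarrow> k \<le> d \<Longrightarrow> (\<Sum>b<k. x (mu b)) \<le> (\<Sum>b<k. r (mu b))"
  shows "is_extreme_point r X"
  unfolding is_extreme_point_def
proof (intro conjI ballI allI impI notI)
  fix x y and t :: real
  assume "x \<in> X" "y \<in> X" and t: "0 < t \<and> t < 1 \<and> x \<noteq> y"
    and r: "r = (\<lambda>k. (1 - t) * x k + t * y k)"
  have "(\<Sum>b<k. x (mu b)) = (\<Sum>b<k. r (mu b)) \<and> (\<Sum>b<k. y (mu b)) = (\<Sum>b<k. r (mu b))"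
    if "k \<le> d" for k
  proof -
    define A B R where "A = (\<Sum>b<k. x (mu b))" and "B = (\<Sum>b<k. y (mu b))"
      and "R = (\<Sum>b<k. r (mu b))"
    have "R = (1 - t) * A + t * B"
      unfolding A_def B_def R_def r by (simp add: sum.distrib sum_distrib_left)
    then have "(1 - t) * (R - A) + t * (R - B) = 0"
      by (simp add: algebra_simps)
    moreover have "0 \<le> (1 - t) * (R - A)" "0 \<le> t * (R - B)"
      using maximal[OF \<open>x \<in> X\<close> that] maximal[OF \<open>y \<in> X\<close> that] t
      unfolding A_def B_def R_def by simp_all
    ultimately have "(1 - t) * (R - A) = 0" "t * (R - B) = 0"
      by linarith+
    then show ?thesis
      using t unfolding A_def B_def R_def by simp
  qed
  then have "x = r" "y = r"
    using vanish \<open>x \<in> X\<close> \<open>y \<in> X\<close> \<open>r \<in> X\<close> by (auto intro: eq_if_prefix_sums_eq[OF mu])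
  then show False
    using t by simp
qed (fact \<open>r \<in> X\<close>)

lemma gibbs_pos: "i < d \<Longrightarrow> 0 < gibbs d \<beta> E i"
proof -
  assume "i < d"
  then have "0 < ZZ d \<beta> E"
    unfolding ZZ_def qq_def by (intro sum_pos) auto
  with \<open>i < d\<close> show ?thesis
    unfolding gibbs_def qq_def by simp
qed

lemma TP_nonneg: "S \<in> TP d \<beta> E \<Longrightarrow> i < d \<Longrightarrow> j < d \<Longrightarrow> 0 \<le> S i j"
  unfolding TP_def by blast

lemma TP_outside: "S \<in> TP d \<beta> E \<Longrightarrow> d \<le> i \<or> d \<le> j \<Longrightarrow> S i j = 0"
  unfolding TP_def by blast

lemma TP_colsum: "S \<in> TP d \<beta> E \<Longrightarrow> j < d \<Longrightarrow> (\<Sum>i<d. S i j) = 1"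
  unfolding TP_def by blast

lemma TP_fixes_gibbs: "S \<in> TP d \<beta> E \<Longrightarrow> mat_app d S (gibbs d \<beta> E) = gibbs d \<beta> E"
  unfolding TP_def by blast

definition prefix_colsum :: "(nat \<Rightarrow> nat) \<Rightarrow> (nat \<Rightarrow> nat \<Rightarrow> real) \<Rightarrow> nat \<Rightarrow> nat \<Rightarrow> real" where
  "prefix_colsum mu S k j = (\<Sum>b<k. S (mu b) j)"

lemma prefix_colsum_full:
  assumes "S \<in> TP d \<beta> E" and "bij_betw mu {..<d} {..<d}" and "j < d"
  shows "prefix_colsum mu S d j = 1"
  using sum.reindex_bij_betw[OF assms(2), of "\<lambda>i. S i j"] TP_colsum[OF assms(1,3)]
  unfolding prefix_colsum_def by simp

lemma prefix_colsum_bounds: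
  assumes S: "S \<in> TP d \<beta> E" and mu: "bij_betw mu {..<d} {..<d}" and "k \<le> d" "j < d"
  shows "0 \<le> prefix_colsum mu S k j" and "prefix_colsum mu S k j \<le> 1"
proof -
  have nonneg: "0 \<le> S (mu b) j" if "b < d" for b
    using TP_nonneg[OF S] bij_betwE[OF mu] that \<open>j < d\<close> by blast
  then show "0 \<le> prefix_colsum mu S k j"
    unfolding prefix_colsum_def using \<open>k \<le> d\<close> by (intro sum_nonneg) auto
  have "prefix_colsum mu S k j \<le> prefix_colsum mu S d j"
    unfolding prefix_colsum_def using \<open>k \<le> d\<close> nonneg by (intro sum_mono2) auto
  then show "prefix_colsum mu S k j \<le> 1"
    using prefix_colsum_full[OF S mu \<open>j < d\<close>] by simp
qed

lemma prefix_sum_mat_app: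
  assumes "mu ` {..<d} \<subseteq> {..<d}" and "k \<le> d"
  shows "(\<Sum>b<k. mat_app d S x (mu b)) = (\<Sum>j<d. prefix_colsum mu S k j * x j)"
proof -
  have "(\<Sum>b<k. mat_app d S x (mu b)) = (\<Sum>b<k. \<Sum>j<d. S (mu b) j * x j)"
  proof (rule sum.cong)
    show "mat_app d S x (mu b) = (\<Sum>j<d. S (mu b) j * x j)" if "b \<in> {..<k}" for b
    proof -
      have "mu b < d"
        using assms that by (auto simp: image_subset_iff)
      then show ?thesis
        unfolding mat_app_def by simp
    qed
  qed simp
  also have "\<dots> = (\<Sum>j<d. prefix_colsum mu S k j * x j)"
    unfolding prefix_colsum_def sum_distrib_right by (rule sum.swap)
  finally show ?thesis .
qed

lemma mat_app_cong: "(\<And>j. j < d \<Longrightarrow> x j = y j) \<Longrightarrow> mat_app d S x = mat_app d S y"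
  unfolding mat_app_def by (intro ext) simp

definition ratio_sorted :: "nat \<Rightarrow> (nat \<Rightarrow> nat \<Rightarrow> real) \<Rightarrow> (nat \<Rightarrow> nat) \<Rightarrow> (nat \<Rightarrow> real) \<Rightarrow> bool" where
  "ratio_sorted d T mu \<rho> \<longleftrightarrow> (\<forall>b b' j j'. b < b' \<and> b' < d \<and> j < d \<and> j' < d \<and>
     0 < T (mu b) j \<and> 0 < T (mu b') j' \<longrightarrow> \<rho> j' \<le> \<rho> j)"

lemma ratio_sortedD:
  "ratio_sorted d T mu \<rho> \<Longrightarrow> b < b' \<Longrightarrow> b' < d \<Longrightarrow> j < d \<Longrightarrow> j' < d \<Longrightarrow>
    0 < T (mu b) j \<Longrightarrow> 0 < T (mu b') j' \<Longrightarrow> \<rho> j' \<le> \<rho> j"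
  unfolding ratio_sorted_def by blast

lemma plain_drawing_ratio_sorted:
  assumes "is_ordering d lam" and plain: "plain_drawing d T lam mu"
    and sorted: "\<And>a. a + 1 < d \<Longrightarrow> \<rho> (lam (a + 1)) \<le> \<rho> (lam a)"
  shows "ratio_sorted d T mu \<rho>"
  unfolding ratio_sorted_def
proof (intro allI impI, elim conjE)
  fix b b' j j'
  assume "b < b'" "b' < d" "j < d" "j' < d" and edges: "0 < T (mu b) j" "0 < T (mu b') j'"
  obtain a a' where "a < d" "j = lam a" "a' < d" "j' = lam a'"
    using assms(1) \<open>j < d\<close> \<open>j' < d\<close> unfolding is_ordering_def bij_betw_def by blast
  have "\<not> a' < a"
  proof
    assume "a' < a"
    then have "\<exists>a a' b b'. a < d \<and> a' < d \<and> b < d \<and> b' < d \<and> a < a' \<and> b > b' \<and>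
        G_edge T (lam a) (mu b) \<and> G_edge T (lam a') (mu b')"
      using \<open>a < d\<close> \<open>a' < d\<close> \<open>b < b'\<close> \<open>b' < d\<close> edges \<open>j = lam a\<close> \<open>j' = lam a'\<close>
      unfolding G_edge_def by (intro exI[of _ a'] exI[of _ a] exI[of _ b'] exI[of _ b]) auto
    with plain show False
      unfolding plain_drawing_def by blast
  qed
  have "(\<rho> \<circ> lam) a' \<le> (\<rho> \<circ> lam) a"
  proof (rule lift_Suc_antimono_le_ivl[where N = "{a. a + 1 < d}"])
    show "(\<rho> \<circ> lam) (Suc n) \<le> (\<rho> \<circ> lam) n" if "n \<in> {a. a + 1 < d}" for n
      using sorted that by simp
  qed (use \<open>\<not> a' < a\<close> \<open>a' < d\<close> in auto)
  then show "\<rho> j' \<le> \<rho> j"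
    using \<open>j = lam a\<close> \<open>j' = lam a'\<close> by simp
qed

lemma mat_app_ratio_le:
  fixes T :: "nat \<Rightarrow> nat \<Rightarrow> real" and g \<rho> :: "nat \<Rightarrow> real"
  assumes "i < d" "i' < d"
    and T_nonneg: "\<And>j. j < d \<Longrightarrow> 0 \<le> T i j \<and> 0 \<le> T i' j"
    and g_nonneg: "\<And>j. j < d \<Longrightarrow> 0 \<le> g j"
    and sorted: "\<And>j j'. j < d \<Longrightarrow> j' < d \<Longrightarrow> 0 < T i j \<Longrightarrow> 0 < T i' j' \<Longrightarrow> \<rho> j' \<le> \<rho> j"
  shows "mat_app d T g i * mat_app d T (\<lambda>j. g j * \<rho> j) i'
    \<le> mat_app d T (\<lambda>j. g j * \<rho> j) i * mat_app d T g i'"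
proof -
  have term_le: "T i j * g j * (T i' j' * (g j' * \<rho> j')) \<le> T i j * (g j * \<rho> j) * (T i' j' * g j')"
    if "j < d" "j' < d" for j j'
  proof (cases "0 < T i j \<and> 0 < T i' j'")
    case True
    have "(T i j * g j * T i' j' * g j') * \<rho> j' \<le> (T i j * g j * T i' j' * g j') * \<rho> j"
      using True sorted[OF that] T_nonneg g_nonneg that by (intro mult_left_mono) auto
    then show ?thesis
      by (simp add: mult_ac)
  next
    case False
    have "0 \<le> T i j" "0 \<le> T i' j'"
      using T_nonneg that by auto
    with False have "T i j = 0 \<or> T i' j' = 0"
      by linarith
    then show ?thesis
      by auto
  qed
  have "mat_app d T g i * mat_app d T (\<lambda>j. g j * \<rho> j) i'
      = (\<Sum>j<d. \<Sum>j'<d. T i j * g j * (T i' j' * (g j' * \<rho> j')))"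
    using \<open>i < d\<close> \<open>i' < d\<close> unfolding mat_app_def by (simp add: sum_product)
  also have "\<dots> \<le> (\<Sum>j<d. \<Sum>j'<d. T i j * (g j * \<rho> j) * (T i' j' * g j'))"
    using term_le by (intro sum_mono) auto
  also have "\<dots> = mat_app d T (\<lambda>j. g j * \<rho> j) i * mat_app d T g i'"
    using \<open>i < d\<close> \<open>i' < d\<close> unfolding mat_app_def by (simp add: sum_product)
  finally show ?thesis .
qed

lemma ratio_sorted_prefix_colsum_greedy:
  assumes T: "T \<in> TP d \<beta> E" and mu: "bij_betw mu {..<d} {..<d}"
    and sorted: "ratio_sorted d T mu \<rho>" and "k \<le> d" "j < d" "j' < d"
    and "0 < prefix_colsum mu T k j" and "prefix_colsum mu T k j' < 1"
  shows "\<rho> j' \<le> \<rho> j"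
proof -
  have mu_lt: "mu b < d" if "b < d" for b
    using bij_betwE[OF mu] that by blast
  have "\<exists>b<k. 0 < T (mu b) j"
  proof (rule ccontr)
    assume "\<not> ?thesis"
    then have "prefix_colsum mu T k j \<le> 0"
      unfolding prefix_colsum_def by (intro sum_nonpos) (meson leD lessThan_iff not_less)
    with \<open>0 < prefix_colsum mu T k j\<close> show False
      by simp
  qed
  then obtain b where "b < k" "0 < T (mu b) j"
    by blast
  have "\<exists>b'. k \<le> b' \<and> b' < d \<and> 0 < T (mu b') j'"
  proof (rule ccontr)
    assume none: "\<not> ?thesis"
    have "T (mu b') j' = 0" if "b' \<in> {..<d} - {..<k}" for b'
    proof -
      have "0 \<le> T (mu b') j'" "\<not> 0 < T (mu b') j'"
        using that none TP_nonneg[OF T mu_lt \<open>j' < d\<close>] by auto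
      then show ?thesis
        by linarith
    qed
    then have "prefix_colsum mu T k j' = prefix_colsum mu T d j'"
      unfolding prefix_colsum_def using \<open>k \<le> d\<close> by (intro sum.mono_neutral_left) auto
    with \<open>prefix_colsum mu T k j' < 1\<close> show False
      using prefix_colsum_full[OF T mu \<open>j' < d\<close>] by simp
  qed
  then obtain b' where "k \<le> b'" "b' < d" "0 < T (mu b') j'"
    by blast
  show ?thesis
    using \<open>b < k\<close> \<open>k \<le> b'\<close> \<open>b' < d\<close> \<open>j < d\<close> \<open>j' < d\<close> \<open>0 < T (mu b) j\<close> \<open>0 < T (mu b') j'\<close>
    by (intro ratio_sortedD[OF sorted]) auto
qed

lemma thermal_prefix_sums_maximal:
  fixes d :: nat and \<beta> :: real and E p :: "nat \<Rightarrow> real"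
  defines "\<rho> \<equiv> \<lambda>j. p j / gibbs d \<beta> E j"
  assumes S: "S \<in> TP d \<beta> E" and T: "T \<in> TP d \<beta> E" and mu: "bij_betw mu {..<d} {..<d}"
    and sorted: "ratio_sorted d T mu \<rho>" and "k \<le> d"
  shows "(\<Sum>b<k. mat_app d S p (mu b)) \<le> (\<Sum>b<k. mat_app d T p (mu b))"
    and "inj_on \<rho> {..<d} \<Longrightarrow> (\<Sum>b<k. mat_app d S p (mu b)) = (\<Sum>b<k. mat_app d T p (mu b)) \<Longrightarrow>
      j < d \<Longrightarrow> prefix_colsum mu S k j = prefix_colsum mu T k j"
proof -
  let ?g = "gibbs d \<beta> E"
  have mu_into: "mu ` {..<d} \<subseteq> {..<d}"
    using mu by (simp add: bij_betw_def)
  have p_eq: "p j = ?g j * \<rho> j" if "j < d" for j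
    using gibbs_pos[OF that, of \<beta> E] unfolding \<rho>_def by simp
  have partial_sum: "(\<Sum>b<k. mat_app d U p (mu b)) = (\<Sum>j<d. prefix_colsum mu U k j * ?g j * \<rho> j)" for U
    unfolding prefix_sum_mat_app[OF mu_into \<open>k \<le> d\<close>] by (intro sum.cong) (simp_all add: p_eq)
  have mass: "(\<Sum>j<d. prefix_colsum mu U k j * ?g j) = (\<Sum>b<k. ?g (mu b))" if "U \<in> TP d \<beta> E" for U
    using prefix_sum_mat_app[OF mu_into \<open>k \<le> d\<close>, of U ?g] TP_fixes_gibbs[OF that] by simp
  have same_mass: "(\<Sum>j<d. prefix_colsum mu S k j * ?g j) = (\<Sum>j<d. prefix_colsum mu T k j * ?g j)"
    using mass[OF S] mass[OF T] by simp
  have g_pos: "\<And>j. j \<in> {..<d} \<Longrightarrow> 0 < ?g j"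
    using gibbs_pos[of _ d \<beta> E] by simp
  have bounds: "\<And>j. j \<in> {..<d} \<Longrightarrow> 0 \<le> prefix_colsum mu S k j \<and> prefix_colsum mu S k j \<le> 1"
    using prefix_colsum_bounds[OF S mu \<open>k \<le> d\<close>] by simp
  have greedy: "\<And>j j'. j \<in> {..<d} \<Longrightarrow> j' \<in> {..<d} \<Longrightarrow> 0 < prefix_colsum mu T k j \<Longrightarrow>
      prefix_colsum mu T k j' < 1 \<Longrightarrow> \<rho> j' \<le> \<rho> j"
    using ratio_sorted_prefix_colsum_greedy[OF T mu sorted \<open>k \<le> d\<close>] by simp
  note knapsack = fractional_knapsack[OF finite_lessThan g_pos bounds greedy same_mass]
  show "(\<Sum>b<k. mat_app d S p (mu b)) \<le> (\<Sum>b<k. mat_app d T p (mu b))"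
    unfolding partial_sum by (rule knapsack(1))
  show "prefix_colsum mu S k j = prefix_colsum mu T k j"
    if "inj_on \<rho> {..<d}" "(\<Sum>b<k. mat_app d S p (mu b)) = (\<Sum>b<k. mat_app d T p (mu b))" "j < d"
    using knapsack(2) that unfolding partial_sum by simp
qed

lemma thermal_beta_order:
  assumes T: "T \<in> TP d \<beta> E" and mu: "is_ordering d mu"
    and sorted: "ratio_sorted d T mu (\<lambda>j. p j / gibbs d \<beta> E j)"
  shows "beta_order d \<beta> E (mat_app d T p) mu"
  unfolding beta_order_def
proof (intro conjI allI impI)
  fix a
  assume "a + 1 < d"
  let ?g = "gibbs d \<beta> E" and ?\<rho> = "\<lambda>j. p j / gibbs d \<beta> E j"
  define i i' where "i = mu a" and "i' = mu (a + 1)"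
  have "i < d" "i' < d"
    using mu \<open>a + 1 < d\<close> unfolding i_def i'_def is_ordering_def bij_betw_def by auto
  have "mat_app d T (\<lambda>j. ?g j * ?\<rho> j) = mat_app d T p"
  proof (rule mat_app_cong)
    show "?g j * ?\<rho> j = p j" if "j < d" for j
      using gibbs_pos[OF that, of \<beta> E] by simp
  qed
  moreover have "mat_app d T ?g = ?g"
    by (rule TP_fixes_gibbs[OF T])
  moreover have "mat_app d T ?g i * mat_app d T (\<lambda>j. ?g j * ?\<rho> j) i'
      \<le> mat_app d T (\<lambda>j. ?g j * ?\<rho> j) i * mat_app d T ?g i'"
  proof (rule mat_app_ratio_le[OF \<open>i < d\<close> \<open>i' < d\<close>])
    show "\<And>j j'. j < d \<Longrightarrow> j' < d \<Longrightarrow> 0 < T i j \<Longrightarrow> 0 < T i' j' \<Longrightarrow> ?\<rho> j' \<le> ?\<rho> j"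
      using ratio_sortedD[OF sorted, of a "a + 1"] \<open>a + 1 < d\<close> unfolding i_def i'_def by simp
  qed (use TP_nonneg[OF T] gibbs_pos \<open>i < d\<close> \<open>i' < d\<close> in \<open>auto simp: less_imp_le\<close>)
  ultimately have "?g i * mat_app d T p i' \<le> mat_app d T p i * ?g i'"
    by simp
  then show "mat_app d T p (mu (a + 1)) / ?g (mu (a + 1)) \<le> mat_app d T p (mu a) / ?g (mu a)"
    using gibbs_pos[OF \<open>i < d\<close>] gibbs_pos[OF \<open>i' < d\<close>] unfolding i_def i'_def
    by (simp add: divide_simps mult.commute)
qed (fact mu)

lemma thermal_preimage_unique:
  assumes S: "S \<in> TP d \<beta> E" and T: "T \<in> TP d \<beta> E" and mu: "bij_betw mu {..<d} {..<d}"
    and sorted: "ratio_sorted d T mu (\<lambda>j. p j / gibbs d \<beta> E j)"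
    and inj: "inj_on (\<lambda>j. p j / gibbs d \<beta> E j) {..<d}" and same_image: "mat_app d S p = mat_app d T p"
  shows "S = T"
proof (intro ext)
  fix i j
  show "S i j = T i j"
  proof (cases "j < d")
    case True
    have "(\<lambda>i. S i j) = (\<lambda>i. T i j)"
    proof (rule eq_if_prefix_sums_eq[OF mu])
      show "(\<Sum>b<k. S (mu b) j) = (\<Sum>b<k. T (mu b) j)" if "k \<le> d" for k
        using thermal_prefix_sums_maximal(2)[OF S T mu sorted that inj _ True] same_image
        unfolding prefix_colsum_def by simp
    qed (use TP_outside[OF S] TP_outside[OF T] in auto)
    then show ?thesis
      by metis
  qed (use TP_outside[OF S] TP_outside[OF T] in auto)
qed

theorem mainTheorem9:
  fixes d :: nat and \<beta> :: real and E :: "nat \<Rightarrow> real"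
    and T :: "nat \<Rightarrow> nat \<Rightarrow> real" and lam mu :: "nat \<Rightarrow> nat" and p :: "nat \<Rightarrow> real"
  assumes "d \<ge> 2" and "\<beta> > 0" and "E 0 = 0" and "inj_on E {..<d}"
    and "T \<in> TP d \<beta> E" and "biplanar d \<beta> E T"
    and "is_ordering d lam" and "is_ordering d mu" and "plain_drawing d T lam mu"
    and "is_state d p" and "beta_order d \<beta> E p lam"
  shows "is_extreme_point (mat_app d T p) (TP_orbit d \<beta> E p)
    \<and> beta_order d \<beta> E (mat_app d T p) mu
    \<and> (inj_on (\<lambda>i. p i / gibbs d \<beta> E i) {..<d} \<longrightarrow>
         (\<forall>S \<in> TP d \<beta> E. mat_app d S p = mat_app d T p \<longrightarrow> S = T))"
proof -
  let ?\<rho> = "\<lambda>i. p i / gibbs d \<beta> E i"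
  have T: "T \<in> TP d \<beta> E" and mu: "bij_betw mu {..<d} {..<d}"
    using assms(5,8) unfolding is_ordering_def by simp_all
  have sorted: "ratio_sorted d T mu ?\<rho>"
    using assms(11) by (intro plain_drawing_ratio_sorted[OF assms(7,9)]) (simp add: beta_order_def)
  have "is_extreme_point (mat_app d T p) (TP_orbit d \<beta> E p)"
  proof (rule extreme_point_if_prefix_sums_maximal[OF mu])
    show "mat_app d T p \<in> TP_orbit d \<beta> E p"
      unfolding TP_orbit_def using T by blast
    show "x i = 0" if "x \<in> TP_orbit d \<beta> E p" "d \<le> i" for x i
      using that unfolding TP_orbit_def mat_app_def by auto
    show "(\<Sum>b<k. x (mu b)) \<le> (\<Sum>b<k. mat_app d T p (mu b))" if "x \<in> TP_orbit d \<beta> E p" "k \<le> d" for x k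
      using that thermal_prefix_sums_maximal(1)[OF _ T mu sorted] unfolding TP_orbit_def by blast
  qed
  moreover have "beta_order d \<beta> E (mat_app d T p) mu"
    using thermal_beta_order[OF T assms(8) sorted] .
  moreover have "S = T" if "inj_on ?\<rho> {..<d}" "S \<in> TP d \<beta> E" "mat_app d S p = mat_app d T p" for S
    using thermal_preimage_unique[OF that(2) T mu sorted that(1,3)] .
  ultimately show ?thesis
    by blast
qed

end
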